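(* Let $k\ge1$ and let $F$ be a 2-factor on $3k$ vertices. The bipartite construction $B$ with ratio $\frac13$ on $3k$ vertices contains a copy of $F$ with at least $2k-1$ red edges and a copy of $F$ with at least $2k-1$ blue edges.
   Context: A 2-factor on $N$ vertices is a 2-regular graph on $N$ vertices. The bipartite construction with ratio $\rho$ on $N$ vertices is the red/blue-coloring of $K_N$ obtained by partitioning the vertices into $X\cup Y$ with $|X|=\rho N$, coloring all edges touching $X$ with one color and all edges inside $Y$ with the other color (either assignment of red/blue). A copy of $F$ is a subgraph isomorphic to $F$. *)

theory Defs
  imports Complex_Main
begin

datatype colour = Red | Blue

definition two_factor :: "'a set \<Rightarrow> 'a set set \<Rightarrow> bool" where
  "two_factor V E \<longleftrightarrow> finite V \<and> (\<forall>e\<in>E. e \<subseteq> V \<and> card e = 2)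
     \<and> (\<forall>v\<in>V. card {e\<in>E. v \<in> e} = 2)"

definition KN_edges :: "nat \<Rightarrow> nat set set" where
  "KN_edges N = {e. e \<subseteq> {0..<N} \<and> card e = 2}"

definition bipartite_construction :: "nat \<Rightarrow> real \<Rightarrow> (nat set \<Rightarrow> colour) \<Rightarrow> bool" where
  "bipartite_construction N rho col \<longleftrightarrow>
     (\<exists>X \<subseteq> {0..<N}. real (card X) = rho * real N \<and>
       ((\<forall>e\<in>KN_edges N. col e = (if e \<inter> X \<noteq> {} then Red else Blue)) \<or>
        (\<forall>e\<in>KN_edges N. col e = (if e \<inter> X \<noteq> {} then Blue else Red))))"

definition has_copy_with :: "nat \<Rightarrow> (nat set \<Rightarrow> colour) \<Rightarrow> 'a set \<Rightarrow> 'a set set \<Rightarrow> colour \<Rightarrow> nat \<Rightarrow> bool" where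
  "has_copy_with N col V E c m \<longleftrightarrow>
     (\<exists>f. inj_on f V \<and> f ` V \<subseteq> {0..<N} \<and> card {e\<in>E. col (f ` e) = c} \<ge> m)"

end

theory Submission
  imports Defs
begin

text \<open>Embed \<open>F\<close> so that a \<open>k\<close>-set \<open>T\<close> of its vertices lands on \<open>X\<close>: the edges of \<open>F\<close>
  meeting \<open>T\<close> then get one colour and the edges avoiding \<open>T\<close> the other. By 2-regularity,
  the edges inside \<open>T\<close> plus the edges meeting \<open>T\<close> number \<open>2|T|\<close>. An independent \<open>k\<close>-set,
  found greedily because a vertex and its two neighbours block at most 3 of the \<open>3k\<close>
  vertices, meets \<open>2k\<close> edges. A \<open>k\<close>-set spanning at least \<open>k - 1\<close> edges, grown one vertex
  at a time along the cycles of \<open>F\<close>, meets at most \<open>k + 1\<close> of the \<open>3k\<close> edges, so at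
  least \<open>2k - 1\<close> edges avoid it.\<close>

lemma two_factor_finite: "two_factor V E \<Longrightarrow> finite V"
  unfolding two_factor_def by blast

lemma two_factor_edge: "two_factor V E \<Longrightarrow> e \<in> E \<Longrightarrow> e \<subseteq> V \<and> card e = 2 \<and> finite e"
  unfolding two_factor_def by (auto intro: card_ge_0_finite)

lemma two_factor_finite_edges: "two_factor V E \<Longrightarrow> finite E"
  unfolding two_factor_def by (meson Pow_iff finite_Pow_iff finite_subset subsetI)

lemma two_factor_sum_card_Int:
  assumes tf: "two_factor V E" and "T \<subseteq> V"
  shows "(\<Sum>e\<in>E. card (e \<inter> T)) = 2 * card T"
proof -
  have fE: "finite E" and fT: "finite T"
    using two_factor_finite_edges[OF tf] two_factor_finite[OF tf] \<open>T \<subseteq> V\<close> finite_subset by auto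
  have "(\<Sum>e\<in>E. card (e \<inter> T)) = (\<Sum>e\<in>E. \<Sum>v\<in>T. of_bool (v \<in> e))"
    using fT by (intro sum.cong) (auto intro: arg_cong[where f = card])
  also have "\<dots> = (\<Sum>v\<in>T. \<Sum>e\<in>E. of_bool (v \<in> e))"
    by (rule sum.swap)
  also have "\<dots> = (\<Sum>v\<in>T. card {e\<in>E. v \<in> e})"
    using fE by (intro sum.cong) (auto intro: arg_cong[where f = card])
  also have "\<dots> = (\<Sum>v\<in>T. 2)"
    using tf \<open>T \<subseteq> V\<close> unfolding two_factor_def by (intro sum.cong) auto
  finally show ?thesis
    by simp
qed

lemma two_factor_card_edges: "two_factor V E \<Longrightarrow> card E = card V"
  using two_factor_sum_card_Int[of V E V] two_factor_edge[of V E]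
  by (simp add: Int_absorb2 cong: sum.cong)

lemma card_Int_doubleton:
  assumes "card e = 2"
  shows "card (e \<inter> T) = of_bool (e \<subseteq> T) + of_bool (e \<inter> T \<noteq> {})"
proof (cases "e \<subseteq> T")
  case True
  then show ?thesis
    using assms by (auto simp: Int_absorb2)
next
  case False
  have "finite e"
    using assms by (intro card_ge_0_finite) simp
  with False have "card (e \<inter> T) < card e"
    by (intro psubset_card_mono) auto
  moreover have "card (e \<inter> T) = 0 \<longleftrightarrow> e \<inter> T = {}"
    using \<open>finite e\<close> by simp
  ultimately show ?thesis
    using False assms by (cases "e \<inter> T = {}") auto
qed

lemma two_factor_card_inside_meeting:
  assumes tf: "two_factor V E" and "T \<subseteq> V"
  shows "card {e\<in>E. e \<subseteq> T} + card {e\<in>E. e \<inter> T \<noteq> {}} = 2 * card T"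
proof -
  have "2 * card T = (\<Sum>e\<in>E. of_bool (e \<subseteq> T) + of_bool (e \<inter> T \<noteq> {}))"
    using two_factor_sum_card_Int[OF assms] two_factor_edge[OF tf]
    by (simp add: card_Int_doubleton cong: sum.cong)
  also have "\<dots> = card {e\<in>E. e \<subseteq> T} + card {e\<in>E. e \<inter> T \<noteq> {}}"
    using two_factor_finite_edges[OF tf] by (simp add: sum.distrib Int_def)
  finally show ?thesis
    by simp
qed

lemma two_factor_card_meeting_independent:
  assumes tf: "two_factor V E" and "T \<subseteq> V" and "\<forall>e\<in>E. \<not> e \<subseteq> T"
  shows "card {e\<in>E. e \<inter> T \<noteq> {}} = 2 * card T"
proof -
  from assms(3) have "{e\<in>E. e \<subseteq> T} = {}"
    by blast
  then show ?thesis
    using two_factor_card_inside_meeting[OF tf assms(2)] by (simp only: card.empty add_0)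
qed

lemma two_factor_card_avoiding:
  assumes tf: "two_factor V E" and "T \<subseteq> V"
  shows "card {e\<in>E. e \<inter> T = {}} + 2 * card T = card V + card {e\<in>E. e \<subseteq> T}"
proof -
  have "{e\<in>E. e \<inter> T = {}} = E - {e\<in>E. e \<inter> T \<noteq> {}}"
    by blast
  then have "card {e\<in>E. e \<inter> T = {}} + card {e\<in>E. e \<inter> T \<noteq> {}} = card E"
    using two_factor_finite_edges[OF tf] card_mono[of E "{e\<in>E. e \<inter> T \<noteq> {}}"]
    by (simp add: card_Diff_subset)
  then show ?thesis
    using two_factor_card_inside_meeting[OF assms] two_factor_card_edges[OF tf] by linarith
qed

lemma two_factor_card_closed_neighbourhood:
  assumes tf: "two_factor V E" and "v \<in> V"
  shows "v \<in> \<Union>{e\<in>E. v \<in> e} \<and> finite (\<Union>{e\<in>E. v \<in> e}) \<and> card (\<Union>{e\<in>E. v \<in> e}) \<le> 3"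
proof -
  have "card {e\<in>E. v \<in> e} = 2"
    using tf \<open>v \<in> V\<close> unfolding two_factor_def by blast
  then obtain e1 e2 where e12: "{e\<in>E. v \<in> e} = {e1, e2}"
    by (meson card_2_iff)
  then have "e1 \<in> E" "e2 \<in> E" "v \<in> e1 \<inter> e2"
    by blast+
  then have "finite e1" "finite e2" "card e1 = 2" "card e2 = 2" "card (e1 \<inter> e2) \<ge> 1"
    using two_factor_edge[OF tf] by (auto simp: Suc_le_eq card_gt_0_iff)
  moreover have "card (e1 \<union> e2) + card (e1 \<inter> e2) = card e1 + card e2"
    using \<open>finite e1\<close> \<open>finite e2\<close> by (rule card_Un_Int[symmetric])
  ultimately show ?thesis
    using e12 \<open>v \<in> e1 \<inter> e2\<close> by simp
qed

lemma two_factor_independent_set: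
  assumes tf: "two_factor V E" and "W \<subseteq> V" and "3 * m \<le> card W"
  shows "\<exists>T\<subseteq>W. card T = m \<and> (\<forall>e\<in>E. \<not> e \<subseteq> T)"
  using assms(2,3)
proof (induction m arbitrary: W)
  case 0
  have "e \<noteq> {}" if "e \<in> E" for e
    using two_factor_edge[OF tf that] by auto
  then show ?case
    by (intro exI[of _ "{}"]) auto
next
  case (Suc m)
  have "finite W"
    using Suc.prems two_factor_finite[OF tf] finite_subset by blast
  then obtain v where "v \<in> W"
    using Suc.prems by fastforce
  define N where "N = \<Union>{e\<in>E. v \<in> e}"
  have "v \<in> N" "finite N" "card N \<le> 3"
    using two_factor_card_closed_neighbourhood[OF tf, of v] \<open>v \<in> W\<close> Suc.prems N_def by auto
  have "card W \<le> card (W - N) + card N"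
    using card_Un_le[of "W - N" N] card_mono[OF finite_UnI[OF _ \<open>finite N\<close>], of "W - N" W]
      \<open>finite W\<close> by auto
  then have "3 * m \<le> card (W - N)"
    using Suc.prems(2) \<open>card N \<le> 3\<close> by simp
  then obtain T where T: "T \<subseteq> W - N" "card T = m" "\<forall>e\<in>E. \<not> e \<subseteq> T"
    using Suc.IH[of "W - N"] Suc.prems by blast
  have "v \<notin> T" "finite T"
    using T(1) \<open>v \<in> N\<close> \<open>finite W\<close> finite_subset by blast+
  have "\<not> e \<subseteq> insert v T" if "e \<in> E" for e
  proof
    assume sub: "e \<subseteq> insert v T"
    show False
    proof (cases "v \<in> e")
      case True
      then have "e \<inter> T = {}"
        using T(1) \<open>e \<in> E\<close> unfolding N_def by blast
      then have "e \<subseteq> {v}"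
        using sub by blast
      then show False
        using two_factor_edge[OF tf \<open>e \<in> E\<close>] card_mono[of "{v}" e] by simp
    next
      case False
      then show False
        using sub T(3) \<open>e \<in> E\<close> by blast
    qed
  qed
  then show ?case
    using T \<open>v \<in> W\<close> \<open>v \<notin> T\<close> \<open>finite T\<close> by (intro exI[of _ "insert v T"]) auto
qed

lemma two_factor_dense_set:
  assumes tf: "two_factor V E" and "m \<le> card V"
  shows "\<exists>T\<subseteq>V. card T = m \<and> m \<le> card {e\<in>E. e \<subseteq> T} + 1"
  using assms(2)
proof (induction m)
  case 0
  show ?case
    by auto
next
  case (Suc m)
  have fE: "finite E" and fV: "finite V"
    using two_factor_finite_edges[OF tf] two_factor_finite[OF tf] .
  obtain T where T: "T \<subseteq> V" "card T = m" "m \<le> card {e\<in>E. e \<subseteq> T} + 1"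
    using Suc by auto
  have "finite T"
    using fV T(1) finite_subset by blast
  obtain w where w: "w \<in> V - T" "m \<le> card {e\<in>E. e \<subseteq> insert w T}"
  proof (cases "\<exists>e\<in>E. e \<inter> T \<noteq> {} \<and> \<not> e \<subseteq> T")
    case True
    then obtain e u w where e: "e \<in> E" "u \<in> e \<inter> T" "w \<in> e - T"
      by blast
    have "finite e" "card e = 2" "e \<subseteq> V"
      using two_factor_edge[OF tf e(1)] by auto
    moreover have "{u, w} \<subseteq> e" "u \<noteq> w"
      using e by auto
    moreover from \<open>u \<noteq> w\<close> have "card {u, w} = 2"
      by simp
    ultimately have "e = {u, w}"
      using card_seteq[of e "{u, w}"] by simp
    have "e \<notin> {e\<in>E. e \<subseteq> T}"
      using e(3) by blast
    then have "card {e\<in>E. e \<subseteq> T} + 1 = card (insert e {e\<in>E. e \<subseteq> T})"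
      using fE by simp
    also have "\<dots> \<le> card {e\<in>E. e \<subseteq> insert w T}"
      using e \<open>e = {u, w}\<close> fE by (intro card_mono) auto
    finally show thesis
      using that[of w] T(3) e(3) \<open>e \<subseteq> V\<close> by auto
  next
    case False
    have "\<not> V \<subseteq> T"
      using Suc.prems T(2) card_mono[OF \<open>finite T\<close>, of V] by linarith
    then obtain w where "w \<in> V - T"
      by blast
    have "e \<noteq> {}" if "e \<in> E" for e
      using two_factor_edge[OF tf that] by auto
    with False have "{e\<in>E. e \<inter> T \<noteq> {}} = {e\<in>E. e \<subseteq> T}"
      by blast
    then have "m = card {e\<in>E. e \<subseteq> T}"
      using two_factor_card_inside_meeting[OF tf T(1)] T(2) by simp
    also have "\<dots> \<le> card {e\<in>E. e \<subseteq> insert w T}"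
      using fE by (intro card_mono) auto
    finally show thesis
      using that \<open>w \<in> V - T\<close> by blast
  qed
  then have "insert w T \<subseteq> V" "card (insert w T) = Suc m"
    using T(1,2) \<open>finite T\<close> by auto
  with w(2) show ?case
    by (intro exI[of _ "insert w T"]) auto
qed

lemma finite_same_card_bij_subset:
  assumes "finite A" "finite B" "card A = card B"
    and "A' \<subseteq> A" "B' \<subseteq> B" "card A' = card B'"
  shows "\<exists>f. bij_betw f A B \<and> f ` A' = B'"
proof -
  have "finite A'" "finite B'"
    using assms finite_subset by auto
  then obtain g where g: "bij_betw g A' B'"
    using assms(6) finite_same_card_bij by blast
  have "card (A - A') = card (B - B')"
    using assms \<open>finite A'\<close> \<open>finite B'\<close> by (simp add: card_Diff_subset)
  then obtain h where h: "bij_betw h (A - A') (B - B')"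
    using assms(1,2) finite_same_card_bij by blast
  define f where "f x = (if x \<in> A' then g x else h x)" for x
  have "bij_betw f A' B'" "bij_betw f (A - A') (B - B')"
    using g h unfolding f_def by (auto intro: bij_betw_cong[THEN iffD1, rotated])
  then have "bij_betw f (A' \<union> (A - A')) (B' \<union> (B - B'))"
    by (rule bij_betw_combine) blast
  then show ?thesis
    using assms(4,5) \<open>bij_betw f A' B'\<close> by (intro exI[of _ f]) (auto simp: bij_betw_def Un_absorb1)
qed

lemma bipartite_constructionE:
  assumes "bipartite_construction N rho col"
  obtains X c1 c2 where "X \<subseteq> {0..<N}" "real (card X) = rho * real N" "c1 \<noteq> c2"
    "{c1, c2} = {Red, Blue}" "\<forall>e\<in>KN_edges N. col e = (if e \<inter> X \<noteq> {} then c1 else c2)"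
proof -
  obtain X where X: "X \<subseteq> {0..<N}" "real (card X) = rho * real N"
    and "(\<forall>e\<in>KN_edges N. col e = (if e \<inter> X \<noteq> {} then Red else Blue)) \<or>
         (\<forall>e\<in>KN_edges N. col e = (if e \<inter> X \<noteq> {} then Blue else Red))"
    using assms unfolding bipartite_construction_def by blast
  then show thesis
    using that[OF X, of Red Blue] that[OF X, of Blue Red] by (auto simp: insert_commute)
qed

lemma has_copy_with_meeting_avoiding:
  assumes tf: "two_factor V E" and "card V = N"
    and "X \<subseteq> {0..<N}" "T \<subseteq> V" "card T = card X"
    and col: "\<forall>e\<in>KN_edges N. col e = (if e \<inter> X \<noteq> {} then c1 else c2)" and "c1 \<noteq> c2"
  shows "has_copy_with N col V E c1 (card {e\<in>E. e \<inter> T \<noteq> {}})"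
    and "has_copy_with N col V E c2 (card {e\<in>E. e \<inter> T = {}})"
proof -
  obtain f where f: "bij_betw f V {0..<N}" "f ` T = X"
    using finite_same_card_bij_subset[of V "{0..<N}" T X] two_factor_finite[OF tf] assms(2-5)
    by auto
  have colour_f: "col (f ` e) = (if e \<inter> T \<noteq> {} then c1 else c2)" if "e \<in> E" for e
  proof -
    have "e \<subseteq> V" "card e = 2"
      using two_factor_edge[OF tf that] by auto
    with f(1) have "f ` e \<in> KN_edges N"
      unfolding KN_edges_def bij_betw_def by (auto simp: card_image inj_on_subset)
    moreover have "f ` e \<inter> X = f ` (e \<inter> T)"
      using f inj_on_image_Int[of f V e T] \<open>e \<subseteq> V\<close> \<open>T \<subseteq> V\<close> unfolding bij_betw_def by simp
    ultimately show ?thesis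
      using col by auto
  qed
  have "{e\<in>E. col (f ` e) = c1} = {e\<in>E. e \<inter> T \<noteq> {}}"
    and "{e\<in>E. col (f ` e) = c2} = {e\<in>E. e \<inter> T = {}}"
    using \<open>c1 \<noteq> c2\<close> by (auto simp: colour_f split: if_splits)
  then show "has_copy_with N col V E c1 (card {e\<in>E. e \<inter> T \<noteq> {}})"
    and "has_copy_with N col V E c2 (card {e\<in>E. e \<inter> T = {}})"
    using f(1) unfolding has_copy_with_def bij_betw_def by (auto intro!: exI[of _ f])
qed

lemma has_copy_with_mono:
  "has_copy_with N col V E c m \<Longrightarrow> m' \<le> m \<Longrightarrow> has_copy_with N col V E c m'"
  unfolding has_copy_with_def by auto

theorem lemma3p8:
  fixes k :: nat and V :: "'a set" and E :: "'a set set" and col :: "nat set \<Rightarrow> colour"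
  assumes "k \<ge> 1"
    and "two_factor V E" and "card V = 3 * k"
    and "bipartite_construction (3 * k) (1/3) col"
  shows "has_copy_with (3 * k) col V E Red (2 * k - 1) \<and> has_copy_with (3 * k) col V E Blue (2 * k - 1)"
proof -
  note tf = assms(2)
  obtain X c1 c2 where X: "X \<subseteq> {0..<3 * k}" "real (card X) = 1/3 * real (3 * k)"
    and "c1 \<noteq> c2" "{c1, c2} = {Red, Blue}"
    and col: "\<forall>e\<in>KN_edges (3 * k). col e = (if e \<inter> X \<noteq> {} then c1 else c2)"
    using bipartite_constructionE[OF assms(4)] .
  have "card X = k"
    using X(2) by simp
  note copies = has_copy_with_meeting_avoiding[OF tf assms(3) X(1) _ _ col \<open>c1 \<noteq> c2\<close>]
  obtain T1 where T1: "T1 \<subseteq> V" "card T1 = k" "\<forall>e\<in>E. \<not> e \<subseteq> T1"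
    using two_factor_independent_set[OF tf, of V k] assms(3) by auto
  have "has_copy_with (3 * k) col V E c1 (2 * k)"
    using copies(1)[OF T1(1)] two_factor_card_meeting_independent[OF tf T1(1,3)]
      T1(2) \<open>card X = k\<close> by simp
  then have "has_copy_with (3 * k) col V E c1 (2 * k - 1)"
    by (rule has_copy_with_mono) simp
  moreover obtain T2 where T2: "T2 \<subseteq> V" "card T2 = k" "k \<le> card {e\<in>E. e \<subseteq> T2} + 1"
    using two_factor_dense_set[OF tf, of k] assms(3) by auto
  then have "2 * k - 1 \<le> card {e\<in>E. e \<inter> T2 = {}}"
    using two_factor_card_avoiding[OF tf T2(1)] assms(3) by linarith
  then have "has_copy_with (3 * k) col V E c2 (2 * k - 1)"
    using copies(2)[OF T2(1)] T2(2) \<open>card X = k\<close> by (auto intro: has_copy_with_mono)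
  ultimately show ?thesis
    using \<open>{c1, c2} = {Red, Blue}\<close> by (auto simp: doubleton_eq_iff)
qed

end
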